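(* For a generalised numerical semigroup $S\subseteq\mathbb{N}^d$ with $\mathcal{H}(S)\neq\emptyset$, the following are equivalent: (i) $S$ is a Frobenius GNS, i.e. $F_\prec(S)$ is the same gap for every relaxed monomial order $\prec$; (ii) $\mathcal{H}(S)$ has a unique maximal element with respect to the natural partial order; (iii) $PF(S)$ has a unique maximal element with respect to the natural partial order.
   Context: $\mathbb{N}=\{0,1,2,\dots\}$. A generalised numerical semigroup (GNS) is a submonoid $S\subseteq\mathbb{N}^d$ whose complement $\mathcal{H}(S)=\mathbb{N}^d\setminus S$ (the gaps) is finite. Natural partial order: $x\le y$ iff $x^{(i)}\le y^{(i)}$ for all $i$. A relaxed monomial order is a total order $\prec$ on $\mathbb{N}^d$ with (i) $v\prec w\Rightarrow v\prec w+u$ for all $u\in\mathbb{N}^d$, (ii) $0\prec v$ for all $v\ne0$; $F_\prec(S)=\max_\prec\mathcal{H}(S)$. A gap $P$ is pseudo-Frobenius if $P+s\in S$ for every nonzero $s\in S$; $PF(S)$ is the set of pseudo-Frobenius gaps. *)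

theory Defs
  imports Main "HOL-Library.Function_Algebras"
begin

text \<open>Points of N^d are functions 'd \<Rightarrow> nat with 'd a finite index type (d = CARD('d)).
  Addition and zero are pointwise (Function_Algebras); the order \<le> on functions is the
  pointwise (natural partial) order from Main.\<close>

definition GNS :: "('d::finite \<Rightarrow> nat) set \<Rightarrow> bool" where
  "GNS S \<longleftrightarrow> 0 \<in> S \<and> (\<forall>x\<in>S. \<forall>y\<in>S. x + y \<in> S) \<and> finite (UNIV - S)"

definition gaps :: "('d::finite \<Rightarrow> nat) set \<Rightarrow> ('d \<Rightarrow> nat) set" where
  "gaps S = UNIV - S"

definition relaxed_monomial_order :: "(('d::finite \<Rightarrow> nat) \<Rightarrow> ('d \<Rightarrow> nat) \<Rightarrow> bool) \<Rightarrow> bool" where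
  "relaxed_monomial_order lt \<longleftrightarrow>
     (\<forall>v. \<not> lt v v) \<and>
     (\<forall>u v w. lt u v \<longrightarrow> lt v w \<longrightarrow> lt u w) \<and>
     (\<forall>v w. v \<noteq> w \<longrightarrow> lt v w \<or> lt w v) \<and>
     (\<forall>u v w. lt v w \<longrightarrow> lt v (w + u)) \<and>
     (\<forall>v. v \<noteq> 0 \<longrightarrow> lt 0 v)"

definition is_Frobenius_wrt :: "(('d::finite \<Rightarrow> nat) \<Rightarrow> ('d \<Rightarrow> nat) \<Rightarrow> bool) \<Rightarrow> ('d \<Rightarrow> nat) set \<Rightarrow> ('d \<Rightarrow> nat) \<Rightarrow> bool" where
  "is_Frobenius_wrt lt S F \<longleftrightarrow> F \<in> gaps S \<and> (\<forall>g\<in>gaps S. g \<noteq> F \<longrightarrow> lt g F)"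

definition Frobenius_GNS :: "('d::finite \<Rightarrow> nat) set \<Rightarrow> bool" where
  "Frobenius_GNS S \<longleftrightarrow> (\<exists>F. \<forall>lt. relaxed_monomial_order lt \<longrightarrow> is_Frobenius_wrt lt S F)"

definition PF :: "('d::finite \<Rightarrow> nat) set \<Rightarrow> ('d \<Rightarrow> nat) set" where
  "PF S = {P \<in> gaps S. \<forall>s\<in>S. s \<noteq> 0 \<longrightarrow> P + s \<in> S}"

definition maximal_elems :: "('d::finite \<Rightarrow> nat) set \<Rightarrow> ('d \<Rightarrow> nat) set" where
  "maximal_elems A = {m \<in> A. \<forall>x\<in>A. m \<le> x \<longrightarrow> x = m}"

definition has_unique_maximal :: "('d::finite \<Rightarrow> nat) set \<Rightarrow> bool" where
  "has_unique_maximal A \<longleftrightarrow> (\<exists>!m. m \<in> maximal_elems A)"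

end

theory Submission
  imports Defs "HOL-Library.Countable"
begin

text \<open>A relaxed monomial order extends the natural partial order, and every gap lies below a
  maximal gap; so a unique maximal gap is the \<prec>-largest gap for every \<prec>. Conversely, two
  distinct maximal gaps are incomparable, so some coordinate \<open>i\<close> is larger in the first one,
  and an order that compares coordinate \<open>i\<close> first prefers it to the second. Finally, maximal
  gaps are pseudo-Frobenius and \<open>PF S\<close> consists of gaps, so the maximal elements of
  \<open>PF S\<close> and of the gaps coincide.\<close>

lemma relaxed_monomial_order_extends_le:
  assumes "relaxed_monomial_order lt" "(v::'d::finite \<Rightarrow> nat) \<le> w" "v \<noteq> w"
  shows "lt v w"
proof (rule ccontr)
  have w: "w = v + (w - v)"
    using assms(2) by (simp add: fun_eq_iff le_fun_def)
  assume "\<not> lt v w"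
  then have "lt w v"
    using assms(1,3) unfolding relaxed_monomial_order_def by blast
  then have "lt w (v + (w - v))"
    using assms(1) unfolding relaxed_monomial_order_def by blast
  then show False
    using assms(1) w unfolding relaxed_monomial_order_def by metis
qed

lemma sum_less_sum_add:
  fixes w u :: "'d::finite \<Rightarrow> nat"
  assumes "u \<noteq> 0"
  shows "sum w UNIV < sum (w + u) UNIV"
proof -
  obtain j where "u j \<noteq> 0"
    using assms by (auto simp: fun_eq_iff)
  then have "sum w UNIV < sum (\<lambda>x. w x + u x) UNIV"
    by (intro sum_strict_mono_ex1) auto
  then show ?thesis
    by (simp add: plus_fun_def)
qed

text \<open>Coordinate \<open>i\<close> decides first; the total degree then makes the order compatible with
  addition, and the injection \<open>to_nat\<close> breaks the remaining ties.\<close>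
definition coord_first_order :: "'d \<Rightarrow> ('d::finite \<Rightarrow> nat) \<Rightarrow> ('d \<Rightarrow> nat) \<Rightarrow> bool" where
  "coord_first_order i v w \<longleftrightarrow> v i < w i \<or> (v i = w i \<and> (sum v UNIV < sum w UNIV \<or>
     (sum v UNIV = sum w UNIV \<and> to_nat v < to_nat w)))"

lemma relaxed_monomial_order_coord_first_order:
  "relaxed_monomial_order (coord_first_order i)"
  unfolding relaxed_monomial_order_def
proof (intro conjI allI impI)
  fix v w :: "'a \<Rightarrow> nat"
  assume "v \<noteq> w"
  then have "to_nat v \<noteq> to_nat w" by simp
  then show "coord_first_order i v w \<or> coord_first_order i w v"
    unfolding coord_first_order_def by auto
next
  fix u v w :: "'a \<Rightarrow> nat"
  assume vw: "coord_first_order i v w"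
  show "coord_first_order i v (w + u)"
  proof (cases "u = 0")
    case False
    then have "sum w UNIV < sum (w + u) UNIV"
      by (rule sum_less_sum_add)
    then show ?thesis
      using vw unfolding coord_first_order_def by (auto simp: plus_fun_def)
  qed (use vw in simp)
next
  fix v :: "'a \<Rightarrow> nat"
  assume "v \<noteq> 0"
  then show "coord_first_order i 0 v"
    using sum_less_sum_add[of v 0] unfolding coord_first_order_def by auto
qed (auto simp: coord_first_order_def)

lemma has_unique_maximal_iff: "has_unique_maximal A \<longleftrightarrow> (\<exists>m. maximal_elems A = {m})"
  unfolding has_unique_maximal_def by auto

lemma maximal_elems_above:
  assumes "finite A" "(x::'d::finite \<Rightarrow> nat) \<in> A"
  shows "\<exists>m\<in>maximal_elems A. x \<le> m"
  using finite_has_maximal2[OF assms] unfolding maximal_elems_def by fastforce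

lemma maximal_elems_subset_eq:
  assumes "finite A" "B \<subseteq> A" "maximal_elems A \<subseteq> (B::('d::finite \<Rightarrow> nat) set)"
  shows "maximal_elems B = maximal_elems A"
proof
  show "maximal_elems B \<subseteq> maximal_elems A"
  proof
    fix m
    assume m: "m \<in> maximal_elems B"
    then have "m \<in> A"
      using assms(2) by (auto simp: maximal_elems_def)
    then obtain g where g: "g \<in> maximal_elems A" "m \<le> g"
      using maximal_elems_above[OF assms(1)] by blast
    then have "g = m"
      using m assms(3) by (auto simp: maximal_elems_def)
    with g show "m \<in> maximal_elems A" by simp
  qed
qed (use assms(2,3) in \<open>auto simp: maximal_elems_def\<close>)

lemma maximal_elems_gaps_subset_PF: "maximal_elems (gaps S) \<subseteq> PF S"
proof
  fix m
  assume m: "m \<in> maximal_elems (gaps S)"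
  have "m + s \<in> S" if "s \<in> S" "s \<noteq> 0" for s
  proof (rule ccontr)
    assume "m + s \<notin> S"
    moreover have "m \<le> m + s" by (simp add: le_fun_def)
    ultimately have "m + s = m"
      using m by (auto simp: maximal_elems_def gaps_def)
    then show False
      using that by (simp add: fun_eq_iff plus_fun_def)
  qed
  then show "m \<in> PF S"
    using m by (simp add: PF_def maximal_elems_def)
qed

lemma maximal_elems_PF:
  assumes "finite (gaps S)"
  shows "maximal_elems (PF S) = maximal_elems (gaps S)"
  using maximal_elems_subset_eq[OF assms _ maximal_elems_gaps_subset_PF]
  by (auto simp: PF_def)

lemma maximal_gap_eq_Frobenius:
  assumes "\<And>i. is_Frobenius_wrt (coord_first_order i) S F" "m \<in> maximal_elems (gaps S)"
  shows "m = F"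
proof (rule ccontr)
  assume ne: "m \<noteq> F"
  have "F \<in> gaps S"
    using assms(1) by (simp add: is_Frobenius_wrt_def)
  then have "\<not> m \<le> F"
    using assms(2) ne by (auto simp: maximal_elems_def)
  then obtain i where i: "F i < m i"
    by (auto simp: le_fun_def not_le)
  have "coord_first_order i m F"
    using assms(1)[of i] assms(2) ne by (simp add: is_Frobenius_wrt_def maximal_elems_def)
  with i show False
    by (auto simp: coord_first_order_def)
qed

lemma unique_maximal_gap_is_Frobenius:
  assumes "finite (gaps S)" "maximal_elems (gaps S) = {m}" "relaxed_monomial_order lt"
  shows "is_Frobenius_wrt lt S m"
  unfolding is_Frobenius_wrt_def
proof (intro conjI ballI impI)
  show "m \<in> gaps S"
    using assms(2) unfolding maximal_elems_def by blast
next
  fix g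
  assume g: "g \<in> gaps S" "g \<noteq> m"
  obtain m' where "m' \<in> maximal_elems (gaps S)" "g \<le> m'"
    using maximal_elems_above[OF assms(1) g(1)] by blast
  then have "g \<le> m"
    using assms(2) by simp
  with g(2) show "lt g m"
    using relaxed_monomial_order_extends_le[OF assms(3)] by blast
qed

theorem mainTheorem2:
  fixes S :: "('d::finite \<Rightarrow> nat) set"
  assumes "GNS S" and "gaps S \<noteq> {}"
  shows "(Frobenius_GNS S \<longleftrightarrow> has_unique_maximal (gaps S)) \<and>
         (has_unique_maximal (gaps S) \<longleftrightarrow> has_unique_maximal (PF S))"
proof
  have fin: "finite (gaps S)"
    using assms(1) by (simp add: GNS_def gaps_def)
  obtain m0 where m0: "m0 \<in> maximal_elems (gaps S)"
    using assms(2) maximal_elems_above[OF fin] by blast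
  show "Frobenius_GNS S \<longleftrightarrow> has_unique_maximal (gaps S)"
  proof
    assume "Frobenius_GNS S"
    then obtain F where "\<And>i. is_Frobenius_wrt (coord_first_order i) S F"
      unfolding Frobenius_GNS_def using relaxed_monomial_order_coord_first_order by blast
    then have "maximal_elems (gaps S) = {F}"
      using m0 maximal_gap_eq_Frobenius by blast
    then show "has_unique_maximal (gaps S)"
      by (auto simp: has_unique_maximal_iff)
  next
    assume "has_unique_maximal (gaps S)"
    then show "Frobenius_GNS S"
      unfolding has_unique_maximal_iff Frobenius_GNS_def
      using unique_maximal_gap_is_Frobenius[OF fin] by blast
  qed
  show "has_unique_maximal (gaps S) \<longleftrightarrow> has_unique_maximal (PF S)"
    using maximal_elems_PF[OF fin] by (simp add: has_unique_maximal_def)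
qed

end
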